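(* Let $E\subseteq\mathbb{R}^d$ be a convex compact set with $0$ in its interior, and let $P=\{p_i:i\in\mathbb{I}\}$ be a trajectory set satisfying condition (C2). If $P+E=\bigcup_{i\in\mathbb{I}}\bigcup_{y\in p_i}(E+y)=\mathbb{R}^d$, then $\ell^-(P)\ge 1/\Delta_E$.
   Context: A trajectory is a set $\gamma(\mathbb{R})$ where $\gamma:\mathbb{R}\to\mathbb{R}^d$ is a curve whose restriction to every bounded interval is rectifiable; a trajectory set $P$ is a countable collection of trajectories (also identified with their union). $\mathcal{M}^P(a,x)$ is the total arc length of the trajectories of $P$ inside the closed ball $B_a^d(x)$; $\ell^-(P)=\liminf_{a\to\infty}\inf_{x\in\mathbb{R}^d}\mathcal{M}^P(a,x)/|B_a^d|$. Condition (C2): there is $\delta:\mathbb{R}^+\to\mathbb{R}^+$ with $\delta(a)=o(a^d)$ such that for every $x\in\mathbb{R}^d$ and every sufficiently large $a$ there is a rectifiable curve $\alpha:[0,1]\to\mathbb{R}^d$ with $\ell(\alpha)=\mathcal{M}^P(a,x)+\delta(a)$ and $P\cap B_a^d(x)\subseteq\alpha([0,1])$. For measurable $E$, $\Delta_E=\sup_{q\in\mathbb{R}^d\setminus\{0\}}|\mathcal{P}_{q^\perp}E|$, where $\mathcal{P}_{q^\perp}$ is the orthogonal projection onto the hyperplane $q^\perp=\{x:\langle x,q\rangle=0\}$ and $|\cdot|$ is $(d-1)$-dimensional volume. *)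

theory Defs
  imports "HOL-Analysis.Analysis" "HOL-Library.Landau_Symbols"
begin

definition curve_length :: "(real \<Rightarrow> 'a::euclidean_space) \<Rightarrow> real \<Rightarrow> real \<Rightarrow> ennreal" where
  "curve_length g a b =
     (SUP ts \<in> {ts. sorted ts \<and> set ts \<subseteq> {a..b}}.
        (\<Sum>i<length ts - 1. ennreal (dist (g (ts ! i)) (g (ts ! Suc i)))))"

definition is_trajectory :: "'a::euclidean_space set \<Rightarrow> bool" where
  "is_trajectory S \<longleftrightarrow> (\<exists>g::real \<Rightarrow> 'a. continuous_on UNIV g \<and>
      (\<forall>a b. a \<le> b \<longrightarrow> curve_length g a b < \<infinity>) \<and> S = range g)"

definition trajectory_set :: "'a::euclidean_space set set \<Rightarrow> bool" where
  "trajectory_set P \<longleftrightarrow> countable P \<and> (\<forall>p\<in>P. is_trajectory p)"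

(* one-dimensional Hausdorff measure (diameter normalisation, so H^1 = arc length) *)
definition hausdorff1 :: "'a::euclidean_space set \<Rightarrow> ennreal" where
  "hausdorff1 S = (SUP e \<in> {0<..}. INF C \<in> {C :: nat \<Rightarrow> 'a set.
        S \<subseteq> (\<Union>n. C n) \<and> (\<forall>n. bounded (C n) \<and> diameter (C n) \<le> e)}.
        (\<Sum>n. ennreal (diameter (C n))))"

definition traj_mass :: "'a::euclidean_space set set \<Rightarrow> real \<Rightarrow> 'a \<Rightarrow> ennreal" where
  "traj_mass P a x = hausdorff1 ((\<Union>P) \<inter> cball x a)"

definition lower_density :: "'a::euclidean_space set set \<Rightarrow> ennreal" where
  "lower_density P = Liminf at_top (\<lambda>a::real.
       INF x. traj_mass P a x / emeasure lebesgue (cball (0::'a) a))"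

definition cond_C2 :: "'a::euclidean_space set set \<Rightarrow> bool" where
  "cond_C2 P \<longleftrightarrow> (\<exists>\<delta>::real \<Rightarrow> real. (\<forall>a>0. \<delta> a > 0) \<and>
      \<delta> \<in> o[at_top](\<lambda>a. a ^ DIM('a)) \<and>
      (\<forall>\<^sub>F a in at_top. \<forall>x. \<exists>\<alpha>::real \<Rightarrow> 'a.
          continuous_on {0..1} \<alpha> \<and> curve_length \<alpha> 0 1 < \<infinity> \<and>
          curve_length \<alpha> 0 1 = traj_mass P a x + ennreal (\<delta> a) \<and>
          (\<Union>P) \<inter> cball x a \<subseteq> \<alpha> ` {0..1}))"

definition proj_perp :: "'a::euclidean_space \<Rightarrow> 'a \<Rightarrow> 'a" where
  "proj_perp q x = x - ((x \<bullet> q) / (q \<bullet> q)) *\<^sub>R q"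

(* (d-1)-dimensional volume of a subset S of the hyperplane q^\<perp>, computed as the
   d-dimensional Lebesgue measure of the unit-height right cylinder over S *)
definition hyperplane_volume :: "'a::euclidean_space \<Rightarrow> 'a set \<Rightarrow> ennreal" where
  "hyperplane_volume q S =
     emeasure lebesgue {y + t *\<^sub>R (q /\<^sub>R norm q) | y t. y \<in> S \<and> t \<in> {0..1}}"

definition Delta :: "'a::euclidean_space set \<Rightarrow> ennreal" where
  "Delta E = (SUP q \<in> UNIV - {0}. hyperplane_volume q (proj_perp q ` E))"

end

theory Submission
  imports Defs "HOL-Real_Asymp.Real_Asymp"
begin

(*
  For a compact convex F and a unit vector u, the volume of F swept along u for time h is
  additive in h, because by convexity the two halves of a longer sweep overlap in exactly a
  translate of F; so the excess over |F| is linear in h. Covering the sweep by about h unit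
  cylinders over the projection of F bounds the slope by the volume of that cylinder, hence
  by Delta F. Chaining translates of E along a fine polygonal approximation of a curve alpha
  of length L and dilating by 1 + eta (which absorbs the approximation error since 0 is
  interior to E) gives |alpha + E| <= (1 + eta)^d |E| + (1 + eta)^(d-1) L Delta E.

  If P + E covers space and E lies in B(0, r), the ball B(x, a - r) lies in alpha + E for the
  curve alpha of (C2) through P \<inter> B(x, a), whose length is M^P(a, x) + delta(a). Comparing
  volumes and letting a tend to infinity, then eta to 0, gives l^-(P) >= 1 / Delta E.
*)

definition sweep :: "'a::real_vector set \<Rightarrow> 'a \<Rightarrow> real \<Rightarrow> 'a set" where
  "sweep F u h = {s *\<^sub>R u + f | s f. s \<in> {0..h} \<and> f \<in> F}"

lemma compact_plus_image:
  fixes g :: "'b::topological_space \<Rightarrow> 'a::real_normed_vector"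
  assumes "compact A" "compact F" "continuous_on A g"
  shows "compact {g s + f | s f. s \<in> A \<and> f \<in> F}"
proof -
  have "{g s + f | s f. s \<in> A \<and> f \<in> F} = (\<lambda>z. g (fst z) + snd z) ` (A \<times> F)"
    by force
  moreover have "continuous_on (A \<times> F) (\<lambda>z. g (fst z) + snd z)"
    by (intro continuous_intros continuous_on_compose2[OF assms(3)]) auto
  ultimately show ?thesis
    using compact_continuous_image compact_Times assms(1,2) by metis
qed

lemma compact_sweep:
  fixes F :: "'a::real_normed_vector set"
  shows "compact F \<Longrightarrow> compact (sweep F u h)"
  unfolding sweep_def by (intro compact_plus_image continuous_intros) auto

lemma sweep_0 [simp]: "sweep F u 0 = F"
  by (force simp: sweep_def)

lemma sweep_add:
  assumes "a \<ge> 0" "b \<ge> 0"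
  shows "sweep F u (a + b) = sweep F u a \<union> (+) (a *\<^sub>R u) ` sweep F u b"
proof (intro equalityI subsetI)
  fix z assume "z \<in> sweep F u (a + b)"
  then obtain s f where z: "z = s *\<^sub>R u + f" "s \<in> {0..a+b}" "f \<in> F"
    by (auto simp: sweep_def)
  show "z \<in> sweep F u a \<union> (+) (a *\<^sub>R u) ` sweep F u b"
  proof (cases "s \<le> a")
    case True
    then show ?thesis using z by (auto simp: sweep_def)
  next
    case False
    then have "(s - a) *\<^sub>R u + f \<in> sweep F u b"
      using z unfolding sweep_def by (intro CollectI exI[of _ "s - a"] exI[of _ f]) auto
    moreover have "z = a *\<^sub>R u + ((s - a) *\<^sub>R u + f)"
      using z by (simp add: algebra_simps)
    ultimately show ?thesis by blast
  qed
next
  fix z assume "z \<in> sweep F u a \<union> (+) (a *\<^sub>R u) ` sweep F u b"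
  then obtain s f where "f \<in> F" "s \<in> {0..a+b}" "z = s *\<^sub>R u + f"
  proof (elim UnE imageE)
    assume "z \<in> sweep F u a"
    then obtain s f where "f \<in> F" "s \<in> {0..a}" "z = s *\<^sub>R u + f"
      unfolding sweep_def by blast
    then show thesis
      using assms that[of f s] by auto
  next
    fix y assume "y \<in> sweep F u b" "z = a *\<^sub>R u + y"
    then obtain s f where "f \<in> F" "s \<in> {0..b}" "z = a *\<^sub>R u + (s *\<^sub>R u + f)"
      unfolding sweep_def by blast
    then show thesis
      using assms that[of f "a + s"] by (simp add: scaleR_add_left add.assoc)
  qed
  then show "z \<in> sweep F u (a + b)"
    unfolding sweep_def by blast
qed

lemma convex_mem_between:
  assumes "convex F" "p + a *\<^sub>R u \<in> F" "p - b *\<^sub>R u \<in> F" "a \<ge> 0" "b \<ge> 0"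
  shows "p \<in> F"
proof (cases "a + b = 0")
  case True
  then have "a = 0" using assms(4,5) by linarith
  then show ?thesis using assms(2) by simp
next
  case False
  then have ab: "a + b > 0" using assms(4,5) by linarith
  have "(b / (a + b)) *\<^sub>R (p + a *\<^sub>R u) + (a / (a + b)) *\<^sub>R (p - b *\<^sub>R u) \<in> F"
    using assms ab by (intro convexD) (auto simp: add_divide_distrib[symmetric])
  moreover have "(b / (a + b)) *\<^sub>R (p + a *\<^sub>R u) + (a / (a + b)) *\<^sub>R (p - b *\<^sub>R u) = p"
    using ab by (simp add: algebra_simps flip: scaleR_add_left add_divide_distrib)
  ultimately show ?thesis by simp
qed

lemma sweep_Int_translate:
  assumes "convex F" "a \<ge> 0" "b \<ge> 0"
  shows "sweep F u a \<inter> (+) (a *\<^sub>R u) ` sweep F u b = (+) (a *\<^sub>R u) ` F"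
proof (intro equalityI subsetI)
  fix z assume "z \<in> sweep F u a \<inter> (+) (a *\<^sub>R u) ` sweep F u b"
  then obtain s1 f1 s2 f2 where z: "z = s1 *\<^sub>R u + f1" "z = a *\<^sub>R u + (s2 *\<^sub>R u + f2)"
    and s: "s1 \<in> {0..a}" "s2 \<in> {0..b}" and f: "f1 \<in> F" "f2 \<in> F"
    unfolding sweep_def by blast
  have "(z - a *\<^sub>R u) + (a - s1) *\<^sub>R u = f1" "(z - a *\<^sub>R u) - s2 *\<^sub>R u = f2"
    using z by (simp_all add: algebra_simps)
  then have "z - a *\<^sub>R u \<in> F"
    using convex_mem_between[OF assms(1)] s f by fastforce
  then show "z \<in> (+) (a *\<^sub>R u) ` F"
    by (intro image_eqI[of _ _ "z - a *\<^sub>R u"]) auto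
next
  fix z assume "z \<in> (+) (a *\<^sub>R u) ` F"
  then obtain f where z: "z = a *\<^sub>R u + f" "f \<in> F" by auto
  then have "z \<in> sweep F u a"
    using assms unfolding sweep_def by auto
  moreover have "f \<in> sweep F u b"
    using z assms unfolding sweep_def by (intro CollectI exI[of _ 0] exI[of _ f]) auto
  ultimately show "z \<in> sweep F u a \<inter> (+) (a *\<^sub>R u) ` sweep F u b"
    using z by blast
qed

lemma measure_sweep_add:
  fixes F :: "'a::euclidean_space set"
  assumes "convex F" "compact F" "a \<ge> 0" "b \<ge> 0"
  shows "measure lebesgue (sweep F u (a + b)) - measure lebesgue F =
     (measure lebesgue (sweep F u a) - measure lebesgue F) + (measure lebesgue (sweep F u b) - measure lebesgue F)"
proof -
  have compact: "compact (sweep F u a)" "compact ((+) (a *\<^sub>R u) ` sweep F u b)"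
    by (intro compact_sweep compact_translation assms(2))+
  have "measure lebesgue (sweep F u (a + b)) = measure lebesgue (sweep F u a)
      + measure lebesgue ((+) (a *\<^sub>R u) ` sweep F u b)
      - measure lebesgue (sweep F u a \<inter> (+) (a *\<^sub>R u) ` sweep F u b)"
    unfolding sweep_add[OF assms(3,4)] using compact by (intro measure_Un3 lmeasurable_compact)
  then show ?thesis
    unfolding sweep_Int_translate[OF assms(1,3,4)] measure_translation by simp
qed

lemma measure_sweep_mult:
  fixes F :: "'a::euclidean_space set"
  assumes "convex F" "compact F" "h \<ge> 0"
  shows "measure lebesgue (sweep F u (real n * h)) - measure lebesgue F =
     real n * (measure lebesgue (sweep F u h) - measure lebesgue F)"
proof (induction n)
  case (Suc n)
  have "real (Suc n) * h = h + real n * h"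
    by (simp add: algebra_simps)
  then show ?case
    using measure_sweep_add[OF assms, of "real n * h" u] Suc assms(3) by (simp add: algebra_simps)
qed simp

definition unit_cylinder :: "'a::real_normed_vector \<Rightarrow> 'a set \<Rightarrow> 'a set" where
  "unit_cylinder q S = {y + t *\<^sub>R (q /\<^sub>R norm q) | y t. y \<in> S \<and> t \<in> {0..1}}"

lemma hyperplane_volume_eq_unit_cylinder:
  "hyperplane_volume q S = emeasure lebesgue (unit_cylinder q S)"
  by (simp add: hyperplane_volume_def unit_cylinder_def)

lemma compact_unit_cylinder:
  assumes "compact S"
  shows "compact (unit_cylinder q S)"
proof -
  have "compact {t *\<^sub>R (q /\<^sub>R norm q) + y | t y. t \<in> {0..1} \<and> y \<in> S}"
    by (intro compact_plus_image continuous_intros assms compact_Icc)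
  moreover have "unit_cylinder q S = {t *\<^sub>R (q /\<^sub>R norm q) + y | t y. t \<in> {0..1} \<and> y \<in> S}"
    unfolding unit_cylinder_def by (auto simp: add.commute)
  ultimately show ?thesis by simp
qed

lemma continuous_on_proj_perp: "continuous_on S (proj_perp q)"
proof -
  have "proj_perp q = (\<lambda>x. x - ((x \<bullet> q) * inverse (q \<bullet> q)) *\<^sub>R q)"
    by (simp add: fun_eq_iff proj_perp_def divide_inverse)
  then show ?thesis
    by (simp add: continuous_intros)
qed

lemma norm_proj_perp_le: "norm (proj_perp q x) \<le> norm x"
proof -
  have "orthogonal (proj_perp q x) ((x \<bullet> q / (q \<bullet> q)) *\<^sub>R q)"
    unfolding orthogonal_def proj_perp_def by (auto simp: algebra_simps)
  then have "(norm x)\<^sup>2 = (norm (proj_perp q x))\<^sup>2 + (norm ((x \<bullet> q / (q \<bullet> q)) *\<^sub>R q))\<^sup>2"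
    using norm_add_Pythagorean by (fastforce simp: proj_perp_def)
  then show ?thesis
    by (metis le_add_same_cancel1 norm_ge_zero power2_le_imp_le zero_le_power2)
qed

lemma Delta_less_top:
  fixes F :: "'a::euclidean_space set"
  assumes "compact F"
  shows "Delta F < top"
proof -
  obtain R where R: "\<And>f. f \<in> F \<Longrightarrow> norm f \<le> R"
    using compact_imp_bounded[OF assms] bounded_iff by blast
  have "unit_cylinder q (proj_perp q ` F) \<subseteq> cball 0 (R + 1)" if "q \<noteq> 0" for q
  proof
    fix z assume "z \<in> unit_cylinder q (proj_perp q ` F)"
    then obtain f t where z: "z = proj_perp q f + t *\<^sub>R (q /\<^sub>R norm q)" "f \<in> F" "t \<in> {0..1}"
      unfolding unit_cylinder_def by blast
    have "norm z \<le> norm (proj_perp q f) + \<bar>t\<bar> * norm (q /\<^sub>R norm q)"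
      unfolding z(1) by (metis norm_scaleR norm_triangle_ineq)
    also have "\<dots> \<le> R + 1"
      using that z(3) norm_proj_perp_le[of q f] R[OF z(2)] by simp
    finally show "z \<in> cball 0 (R + 1)" by simp
  qed
  then have "Delta F \<le> emeasure lebesgue (cball (0::'a) (R + 1))"
    unfolding Delta_def hyperplane_volume_eq_unit_cylinder by (intro SUP_least emeasure_mono) auto
  also have "\<dots> < top"
    using lmeasurable_cball by (simp add: fmeasurable_def)
  finally show ?thesis .
qed

lemma measure_unit_cylinder_le_Delta:
  fixes F :: "'a::euclidean_space set"
  assumes "compact F" "u \<noteq> 0"
  shows "measure lebesgue (unit_cylinder u (proj_perp u ` F)) \<le> enn2real (Delta F)"
proof -
  have "compact (unit_cylinder u (proj_perp u ` F))"
    by (intro compact_unit_cylinder compact_continuous_image continuous_on_proj_perp assms(1))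
  then have "ennreal (measure lebesgue (unit_cylinder u (proj_perp u ` F))) = hyperplane_volume u (proj_perp u ` F)"
    unfolding hyperplane_volume_eq_unit_cylinder by (intro emeasure_eq_measure2[symmetric] lmeasurable_compact)
  also have "\<dots> \<le> Delta F"
    unfolding Delta_def using assms(2) by (intro SUP_upper) auto
  finally show ?thesis
    using enn2real_mono[OF _ Delta_less_top[OF assms(1)]] by fastforce
qed

lemma sweep_subset_cylinder_translates:
  fixes F :: "'a::euclidean_space set"
  assumes "norm u = 1" "F \<subseteq> cball 0 R" "h \<ge> 0"
  shows "sweep F u h \<subseteq> (\<Union>k<nat \<lfloor>h + 2 * R\<rfloor> + 1. (+) ((real k - R) *\<^sub>R u) ` unit_cylinder u (proj_perp u ` F))"
proof
  fix z assume "z \<in> sweep F u h"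
  then obtain s f where z: "z = s *\<^sub>R u + f" "s \<in> {0..h}" "f \<in> F"
    unfolding sweep_def by blast
  \<comment> \<open>z = proj_perp u f + (s + f \<bullet> u) u, and the height \<tau> - R = s + f \<bullet> u lies in [-R, h + R]\<close>
  define \<tau> where "\<tau> = s + f \<bullet> u + R"
  define k where "k = nat \<lfloor>\<tau>\<rfloor>"
  have "\<bar>f \<bullet> u\<bar> \<le> R"
    using Cauchy_Schwarz_ineq2[of f u] assms(1,2) z(3) by fastforce
  then have \<tau>: "0 \<le> \<tau>" "\<tau> \<le> h + 2 * R"
    using z(2) unfolding \<tau>_def by auto
  then have k: "real k \<le> \<tau>" "\<tau> < real k + 1" "k < nat \<lfloor>h + 2 * R\<rfloor> + 1"
    unfolding k_def by linarith+
  have "proj_perp u f + (\<tau> - real k) *\<^sub>R (u /\<^sub>R norm u) \<in> unit_cylinder u (proj_perp u ` F)"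
    unfolding unit_cylinder_def using z(3) k by (intro CollectI exI conjI) auto
  moreover have "z = (real k - R) *\<^sub>R u + (proj_perp u f + (\<tau> - real k) *\<^sub>R (u /\<^sub>R norm u))"
    using assms(1) unfolding z(1) \<tau>_def proj_perp_def by (simp add: algebra_simps dot_square_norm)
  ultimately show "z \<in> (\<Union>k<nat \<lfloor>h + 2 * R\<rfloor> + 1. (+) ((real k - R) *\<^sub>R u) ` unit_cylinder u (proj_perp u ` F))"
    using k(3) by blast
qed

lemma measure_sweep_le_cylinder:
  fixes F :: "'a::euclidean_space set"
  assumes "compact F" "norm u = 1" "F \<subseteq> cball 0 R" "h \<ge> 0" "R \<ge> 0"
  shows "measure lebesgue (sweep F u h) \<le> (h + 2 * R + 1) * measure lebesgue (unit_cylinder u (proj_perp u ` F))"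
proof -
  define C where "C = unit_cylinder u (proj_perp u ` F)"
  define N where "N = nat \<lfloor>h + 2 * R\<rfloor> + 1"
  have C: "compact ((+) a ` C)" for a
    unfolding C_def by (intro compact_translation compact_unit_cylinder compact_continuous_image
        continuous_on_proj_perp assms(1))
  have "measure lebesgue (sweep F u h) \<le> measure lebesgue (\<Union>k<N. (+) ((real k - R) *\<^sub>R u) ` C)"
    using sweep_subset_cylinder_translates[OF assms(2-4)] C unfolding C_def N_def
    by (intro measure_mono_fmeasurable fmeasurableD lmeasurable_compact compact_sweep compact_UN assms(1)) auto
  also have "\<dots> \<le> (\<Sum>k<N. measure lebesgue ((+) ((real k - R) *\<^sub>R u) ` C))"
    using C by (intro measure_UNION_le fmeasurableD lmeasurable_compact) auto
  also have "\<dots> = real N * measure lebesgue C"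
    by (simp add: measure_translation)
  also have "\<dots> \<le> (h + 2 * R + 1) * measure lebesgue C"
    using assms(4,5) unfolding N_def by (intro mult_right_mono) (linarith, simp)
  finally show ?thesis
    unfolding C_def .
qed

lemma nonpos_if_multiples_bounded:
  fixes x c :: real
  assumes "\<And>n::nat. real n * x \<le> c"
  shows "x \<le> 0"
  using ex_less_of_nat_mult[of x c] assms not_le by blast

lemma measure_sweep_excess_le:
  fixes F :: "'a::euclidean_space set"
  assumes "convex F" "compact F" "norm u = 1" "h \<ge> 0"
  shows "measure lebesgue (sweep F u h) - measure lebesgue F
    \<le> h * measure lebesgue (unit_cylinder u (proj_perp u ` F))"
proof -
  obtain R where "R > 0" "\<forall>x\<in>F. norm x \<le> R"
    using compact_imp_bounded[OF assms(2)] bounded_pos by metis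
  then have R: "R \<ge> 0" "F \<subseteq> cball 0 R"
    by auto
  define V where "V = measure lebesgue (unit_cylinder u (proj_perp u ` F))"
  define g where "g = measure lebesgue (sweep F u h) - measure lebesgue F"
  \<comment> \<open>the excess is linear in the sweep length but grows at most like (h + 2R + 1) V\<close>
  have "real n * (g - h * V) \<le> (2 * R + 1) * V" for n
  proof -
    have "real n * g \<le> measure lebesgue (sweep F u (real n * h))"
      using measure_sweep_mult[OF assms(1,2,4), of u n] measure_nonneg[of lebesgue F]
      unfolding g_def by linarith
    also have "\<dots> \<le> (real n * h + 2 * R + 1) * V"
      unfolding V_def using assms(4) by (intro measure_sweep_le_cylinder assms(2,3) R) simp
    finally show ?thesis
      by (simp add: algebra_simps)
  qed
  then have "g - h * V \<le> 0"
    by (rule nonpos_if_multiples_bounded)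
  then show ?thesis
    unfolding g_def V_def by simp
qed

lemma measure_translation_Diff_le:
  fixes F :: "'a::euclidean_space set"
  assumes "convex F" "compact F"
  shows "measure lebesgue ((+) q ` F - (+) p ` F) \<le> norm (q - p) * enn2real (Delta F)"
proof (cases "q = p")
  case False
  define h where "h = norm (q - p)"
  define u where "u = (q - p) /\<^sub>R h"
  have h: "h > 0" "h *\<^sub>R u = q - p" "norm u = 1"
    using False unfolding u_def h_def by auto
  define A where "A = (+) p ` sweep F u h"
  have compact: "compact A" "compact ((+) p ` F)" "compact ((+) q ` F)"
    unfolding A_def by (intro compact_translation compact_sweep assms(2))+
  have pA: "(+) p ` F \<subseteq> A"
    unfolding A_def sweep_def using h(1) by (force intro: exI[of _ 0])
  have "(+) q ` F \<subseteq> A"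
  proof
    fix z assume "z \<in> (+) q ` F"
    then obtain f where "z = p + (h *\<^sub>R u + f)" "f \<in> F"
      using h(2) by (auto simp: algebra_simps)
    then show "z \<in> A"
      using h(1) unfolding A_def sweep_def by (auto intro!: imageI exI[of _ h])
  qed
  then have "measure lebesgue ((+) q ` F - (+) p ` F) \<le> measure lebesgue (A - (+) p ` F)"
    using compact by (intro measure_mono_fmeasurable fmeasurable_Diff lmeasurable_compact fmeasurableD) auto
  also have "\<dots> = measure lebesgue A - measure lebesgue ((+) p ` F)"
    using compact pA by (intro measurable_measure_Diff lmeasurable_compact fmeasurableD)
  also have "\<dots> = measure lebesgue (sweep F u h) - measure lebesgue F"
    unfolding A_def measure_translation ..
  also have "\<dots> \<le> h * measure lebesgue (unit_cylinder u (proj_perp u ` F))"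
    using h by (intro measure_sweep_excess_le assms) auto
  also have "\<dots> \<le> h * enn2real (Delta F)"
    using h by (intro mult_left_mono measure_unit_cylinder_le_Delta assms(2)) auto
  finally show ?thesis
    unfolding h_def .
qed simp

lemma measure_UN_translations_le:
  fixes F :: "'a::euclidean_space set"
  assumes "convex F" "compact F"
  shows "measure lebesgue (\<Union>i\<le>n. (+) (p i) ` F)
    \<le> measure lebesgue F + (\<Sum>i<n. norm (p (Suc i) - p i)) * enn2real (Delta F)"
proof (induction n)
  case 0
  then show ?case by (simp add: measure_translation)
next
  case (Suc n)
  have compact: "compact ((+) (p i) ` F)" for i
    by (intro compact_translation assms(2))
  have "(\<Union>i\<le>Suc n. (+) (p i) ` F) = (\<Union>i\<le>n. (+) (p i) ` F) \<union> ((+) (p (Suc n)) ` F - (+) (p n) ` F)"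
    by (auto simp: atMost_Suc)
  then have "measure lebesgue (\<Union>i\<le>Suc n. (+) (p i) ` F)
      \<le> measure lebesgue (\<Union>i\<le>n. (+) (p i) ` F) + measure lebesgue ((+) (p (Suc n)) ` F - (+) (p n) ` F)"
    using compact by (simp add: measure_Un_le fmeasurableD lmeasurable_compact sets.finite_UN sets.Diff)
  also have "\<dots> \<le> measure lebesgue F + (\<Sum>i<Suc n. norm (p (Suc i) - p i)) * enn2real (Delta F)"
    using Suc measure_translation_Diff_le[OF assms, of "p (Suc n)" "p n"] by (simp add: algebra_simps)
  finally show ?case .
qed

lemma sum_dist_grid_le_curve_length:
  fixes \<alpha> :: "real \<Rightarrow> 'a::euclidean_space"
  assumes "curve_length \<alpha> 0 1 \<le> ennreal L" "L \<ge> 0"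
  shows "(\<Sum>i<n. dist (\<alpha> (real i / real n)) (\<alpha> (real (Suc i) / real n))) \<le> L"
proof (cases "n = 0")
  case False
  define ts where "ts = map (\<lambda>i. real i / real n) [0..<Suc n]"
  have ts: "length ts - 1 = n" "\<And>i. i \<le> n \<Longrightarrow> ts ! i = real i / real n"
    unfolding ts_def by (simp_all add: nth_map del: upt_Suc)
  have "sorted ts"
    unfolding ts_def sorted_map by (intro sorted_wrt_mono_rel[OF _ sorted_upt]) (simp add: divide_right_mono)
  moreover have "set ts \<subseteq> {0..1}"
    unfolding ts_def using False by (auto simp: divide_le_eq)
  ultimately have "(\<Sum>i<length ts - 1. ennreal (dist (\<alpha> (ts ! i)) (\<alpha> (ts ! Suc i)))) \<le> curve_length \<alpha> 0 1"
    unfolding curve_length_def by (intro SUP_upper) simp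
  also have "(\<Sum>i<length ts - 1. ennreal (dist (\<alpha> (ts ! i)) (\<alpha> (ts ! Suc i))))
      = ennreal (\<Sum>i<n. dist (\<alpha> (real i / real n)) (\<alpha> (real (Suc i) / real n)))"
    unfolding ts(1) by (subst sum_ennreal) (auto simp: ts(2) intro!: sum.cong)
  finally have "ennreal (\<Sum>i<n. dist (\<alpha> (real i / real n)) (\<alpha> (real (Suc i) / real n))) \<le> ennreal L"
    using assms(1) by (rule order_trans)
  then show ?thesis
    using assms(2) by simp
qed (use assms in simp)

lemma continuous_on_grid_approx:
  fixes \<alpha> :: "real \<Rightarrow> 'a::metric_space"
  assumes "continuous_on {0..1} \<alpha>" "\<epsilon> > 0"
  obtains n :: nat where "n \<ge> 1" "\<And>t. t \<in> {0..1} \<Longrightarrow> \<exists>i\<le>n. dist (\<alpha> t) (\<alpha> (real i / real n)) < \<epsilon>"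
proof -
  obtain d where d: "d > 0" "\<And>s t. s \<in> {0..1} \<Longrightarrow> t \<in> {0..1} \<Longrightarrow> dist t s < d \<Longrightarrow> dist (\<alpha> t) (\<alpha> s) < \<epsilon>"
    using compact_uniformly_continuous[OF assms(1) compact_Icc] assms(2)
    unfolding uniformly_continuous_on_def by metis
  obtain m where m: "inverse (real (Suc m)) < d"
    using reals_Archimedean[OF d(1)] by blast
  define n where "n = Suc m"
  have "\<exists>i\<le>n. dist (\<alpha> t) (\<alpha> (real i / real n)) < \<epsilon>" if t: "t \<in> {0..1}" for t
  proof (intro exI conjI)
    define i where "i = nat \<lfloor>t * real n\<rfloor>"
    have "real i = \<lfloor>t * real n\<rfloor>"
      using t unfolding i_def by simp
    then have i: "real i \<le> t * real n" "t * real n < real i + 1"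
      by linarith+
    have "dist t (real i / real n) = \<bar>t * real n - real i\<bar> / real n"
      unfolding n_def by (simp add: dist_real_def field_simps abs_divide[symmetric])
    also have "\<dots> < 1 / real n"
      using i unfolding n_def by (intro divide_strict_right_mono) auto
    also have "\<dots> < d"
      using m unfolding n_def by (simp add: divide_inverse)
    finally have "dist t (real i / real n) < d" .
    have "t * real n \<le> real n"
      using t by (simp add: mult_left_le_one_le)
    then show "i \<le> n"
      unfolding i_def by linarith
    then have "real i / real n \<in> {0..1}"
      unfolding n_def by auto
    with \<open>dist t (real i / real n) < d\<close> show "dist (\<alpha> t) (\<alpha> (real i / real n)) < \<epsilon>"
      using d(2) t by blast
  qed
  moreover have "n \<ge> 1"
    unfolding n_def by simp
  ultimately show ?thesis
    using that by blast
qed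

lemma convex_absorbs_small_perturbation:
  assumes "convex E" "cball 0 \<rho> \<subseteq> E" "\<eta> > 0" "e \<in> E" "norm w \<le> \<eta> * \<rho>"
  shows "(e + w) /\<^sub>R (1 + \<eta>) \<in> E"
proof -
  have "norm (w /\<^sub>R \<eta>) \<le> \<rho>"
    using assms(3,5) by (simp add: field_simps)
  then have "w /\<^sub>R \<eta> \<in> E"
    using assms(2) by auto
  then have "(1 / (1 + \<eta>)) *\<^sub>R e + (\<eta> / (1 + \<eta>)) *\<^sub>R (w /\<^sub>R \<eta>) \<in> E"
    using assms(1,3,4) by (intro convexD) (auto simp: add_divide_distrib[symmetric])
  moreover have "(1 / (1 + \<eta>)) *\<^sub>R e + (\<eta> / (1 + \<eta>)) *\<^sub>R (w /\<^sub>R \<eta>) = (e + w) /\<^sub>R (1 + \<eta>)"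
    using assms(3) by (simp add: scaleR_add_right divide_inverse_commute)
  ultimately show ?thesis by simp
qed

lemma measure_curve_plus_le:
  fixes \<alpha> :: "real \<Rightarrow> 'a::euclidean_space"
  assumes E: "convex E" "compact E" "\<rho> > 0" "cball 0 \<rho> \<subseteq> E" and "\<eta> > 0"
    and \<alpha>: "continuous_on {0..1} \<alpha>" "curve_length \<alpha> 0 1 \<le> ennreal L" "L \<ge> 0"
  shows "measure lebesgue {\<alpha> t + e | t e. t \<in> {0..1} \<and> e \<in> E}
     \<le> (1 + \<eta>) ^ DIM('a) * measure lebesgue E + (1 + \<eta>) ^ (DIM('a) - 1) * L * enn2real (Delta E)"
proof -
  define c where "c = 1 + \<eta>"
  have c: "c > 0" "c ^ DIM('a) / c = c ^ (DIM('a) - 1)"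
    using \<open>\<eta> > 0\<close> unfolding c_def by (simp_all add: power_diff)
  define D where "D = enn2real (Delta E)"
  obtain n where n: "\<And>t. t \<in> {0..1} \<Longrightarrow> \<exists>i\<le>n. dist (\<alpha> t) (\<alpha> (real i / real n)) < \<eta> * \<rho>"
    using continuous_on_grid_approx[OF \<alpha>(1)] \<open>\<eta> > 0\<close> E(3) by (metis mult_pos_pos)
  define p where "p i = \<alpha> (real i / real n) /\<^sub>R c" for i
  define U where "U = (\<Union>i\<le>n. (+) (p i) ` E)"
  define S where "S = {\<alpha> t + e | t e. t \<in> {0..1} \<and> e \<in> E}"
  have compact: "compact S" "compact ((\<lambda>y. c *\<^sub>R y + 0) ` U)"
    unfolding S_def U_def
    by (intro compact_plus_image compact_Icc E(2) \<alpha>(1) compact_continuous_image compact_UN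
        compact_translation continuous_intros finite_atMost)+
  have "S \<subseteq> (\<lambda>y. c *\<^sub>R y + 0) ` U"
  proof
    fix z assume "z \<in> S"
    then obtain t e where z: "z = \<alpha> t + e" "t \<in> {0..1}" "e \<in> E"
      unfolding S_def by blast
    obtain i where i: "i \<le> n" "dist (\<alpha> t) (\<alpha> (real i / real n)) < \<eta> * \<rho>"
      using n[OF z(2)] by blast
    define w where "w = \<alpha> t - \<alpha> (real i / real n)"
    have "(e + w) /\<^sub>R c \<in> E"
      unfolding c_def using i(2) z(3) \<open>\<eta> > 0\<close> E(1,4)
      by (intro convex_absorbs_small_perturbation) (auto simp: w_def dist_norm)
    then have "p i + (e + w) /\<^sub>R c \<in> U"
      unfolding U_def using i(1) by blast
    moreover have "z = c *\<^sub>R (p i + (e + w) /\<^sub>R c) + 0"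
      using c(1) unfolding z(1) p_def w_def by (simp add: algebra_simps)
    ultimately show "z \<in> (\<lambda>y. c *\<^sub>R y + 0) ` U"
      by blast
  qed
  then have "measure lebesgue S \<le> measure lebesgue ((\<lambda>y. c *\<^sub>R y + 0) ` U)"
    using compact by (intro measure_mono_fmeasurable fmeasurableD lmeasurable_compact)
  also have "\<dots> = c ^ DIM('a) * measure lebesgue U"
    using measure_lebesgue_affine[of c 0 U] c(1) by simp
  also have "\<dots> \<le> c ^ DIM('a) * (measure lebesgue E + (\<Sum>i<n. norm (p (Suc i) - p i)) * D)"
    unfolding U_def D_def using c(1) by (intro mult_left_mono measure_UN_translations_le E) auto
  also have "(\<Sum>i<n. norm (p (Suc i) - p i)) = (\<Sum>i<n. dist (\<alpha> (real i / real n)) (\<alpha> (real (Suc i) / real n))) / c"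
    using c(1) unfolding p_def sum_divide_distrib
    by (intro sum.cong) (auto simp: dist_norm norm_minus_commute divide_inverse_commute simp flip: scaleR_diff_right)
  also have "c ^ DIM('a) * (measure lebesgue E + \<dots> * D) \<le> c ^ DIM('a) * (measure lebesgue E + L / c * D)"
    using c(1) \<alpha>(2,3) unfolding D_def
    by (intro mult_left_mono add_left_mono mult_right_mono divide_right_mono sum_dist_grid_le_curve_length) auto
  also have "\<dots> = c ^ DIM('a) * measure lebesgue E + c ^ (DIM('a) - 1) * L * D"
    unfolding c(2)[symmetric] by (simp add: algebra_simps)
  finally show ?thesis
    unfolding S_def c_def D_def .
qed

lemma cball_subset_curve_plus:
  fixes E :: "'a::real_normed_vector set"
  assumes "(\<Union>p\<in>P. \<Union>y\<in>p. (\<lambda>e. e + y) ` E) = UNIV" "E \<subseteq> cball 0 r"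
    and "(\<Union>P) \<inter> cball x a \<subseteq> \<alpha> ` {0..1}"
  shows "cball x (a - r) \<subseteq> {\<alpha> t + e | t e. t \<in> {0..1} \<and> e \<in> E}"
proof
  fix w assume w: "w \<in> cball x (a - r)"
  have "w \<in> (\<Union>p\<in>P. \<Union>y\<in>p. (\<lambda>e. e + y) ` E)"
    using assms(1) by simp
  then obtain p v e where pv: "p \<in> P" "v \<in> p" "e \<in> E" "w = e + v"
    by blast
  have "dist x v \<le> dist x w + dist w v"
    by (rule dist_triangle)
  also have "dist w v = norm e"
    unfolding pv(4) dist_norm by simp
  also have "dist x w + norm e \<le> (a - r) + r"
    using w assms(2) pv(3) by (intro add_mono) auto
  finally obtain t where "t \<in> {0..1}" "v = \<alpha> t"
    using assms(3) pv(1,2) by auto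
  then show "w \<in> {\<alpha> t + e | t e. t \<in> {0..1} \<and> e \<in> E}"
    using pv(3,4) by (auto simp: add.commute)
qed

lemma exists_pos_power_mult_less_1:
  fixes \<theta> :: real
  assumes "\<theta> < 1"
  obtains \<eta> where "\<eta> > 0" "(1 + \<eta>) ^ k * \<theta> < 1"
proof -
  have "((\<lambda>\<eta>. (1 + \<eta>) ^ k * \<theta>) \<longlongrightarrow> (1 + 0) ^ k * \<theta>) (at_right 0)"
    by (intro tendsto_intros)
  then have "\<forall>\<^sub>F \<eta> in at_right 0. (1 + \<eta>) ^ k * \<theta> < 1"
    using assms by (intro order_tendstoD(2)) auto
  then have "\<forall>\<^sub>F \<eta> in at_right 0. \<eta> > 0 \<and> (1 + \<eta>) ^ k * \<theta> < 1"
    using eventually_at_right_less by (rule eventually_conj[rotated])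
  then show ?thesis
    using that eventually_happens' trivial_limit_at_right_real by blast
qed

lemma eventually_power_dominates_smallo:
  fixes \<delta> :: "real \<Rightarrow> real"
  assumes "\<delta> \<in> o[at_top](\<lambda>a. a ^ d)" "d > 0" "\<theta> < 1" "\<omega> > 0"
  shows "\<forall>\<^sub>F a in at_top. \<theta> * \<omega> * a ^ d < \<omega> * (a - r) ^ d - K - c * \<delta> a"
proof -
  have "((\<lambda>a::real. (a - r) / a) \<longlongrightarrow> 1) at_top"
    by real_asymp
  moreover have "((\<lambda>a. K / a ^ d) \<longlongrightarrow> 0) at_top"
    using assms(2) by (intro tendsto_divide_0[OF tendsto_const] filterlim_at_top_imp_at_infinity
        filterlim_pow_at_top filterlim_ident)
  moreover have "((\<lambda>a. \<delta> a / a ^ d) \<longlongrightarrow> 0) at_top"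
    by (rule smalloD_tendsto[OF assms(1)])
  ultimately have "((\<lambda>a. \<omega> * ((a - r) / a) ^ d - K / a ^ d - c * (\<delta> a / a ^ d)) \<longlongrightarrow> \<omega> * 1 ^ d - 0 - c * 0) at_top"
    by (intro tendsto_intros)
  moreover have "\<theta> * \<omega> < \<omega> * 1 ^ d - 0 - c * 0"
    using assms(3,4) by simp
  ultimately have "\<forall>\<^sub>F a in at_top. \<theta> * \<omega> < \<omega> * ((a - r) / a) ^ d - K / a ^ d - c * (\<delta> a / a ^ d)"
    by (rule order_tendstoD(1))
  then show ?thesis
    using eventually_gt_at_top[of 0]
  proof eventually_elim
    case (elim a)
    then have "\<theta> * \<omega> < (\<omega> * (a - r) ^ d - K - c * \<delta> a) / a ^ d"
      unfolding power_divide by (simp only: diff_divide_distrib times_divide_eq_right)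
    then show ?case
      using elim(2) by (simp add: less_divide_eq)
  qed
qed

lemma ennreal_le_divide_of_mult_le:
  fixes y T m :: real
  assumes "m > 0" "y * m \<le> T"
  shows "ennreal y \<le> ennreal T / ennreal m"
proof (cases "y \<le> 0")
  case False
  then have "y \<le> T / m" "T \<ge> 0"
    using assms by (simp_all add: le_divide_eq) (smt (verit) mult_pos_pos)
  then show ?thesis
    using assms(1) by (simp add: divide_ennreal ennreal_leI)
qed (simp add: ennreal_neg)

lemma mult_enn2real_less_1:
  assumes "ennreal y < 1 / X" "X < top"
  shows "y * enn2real X < 1"
proof (cases "y \<le> 0 \<or> enn2real X = 0")
  case False
  then have "X = ennreal (enn2real X)" "enn2real X > 0" "y > 0"
    using assms(2) by (auto simp: less_le)
  then have "ennreal y < ennreal (1 / enn2real X)"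
    using assms(1) by (metis divide_ennreal ennreal_1 zero_le_one)
  then show ?thesis
    using \<open>enn2real X > 0\<close> \<open>y > 0\<close> by (simp add: ennreal_less_iff less_divide_eq)
qed (use mult_nonpos_nonneg[of y "enn2real X"] in auto)

lemma measure_cball_le_traj_mass:
  fixes E :: "'a::euclidean_space set" and \<alpha> :: "real \<Rightarrow> 'a"
  assumes E: "convex E" "compact E" "\<rho> > 0" "cball 0 \<rho> \<subseteq> E" "E \<subseteq> cball 0 r" and "\<eta> > 0"
    and cover: "(\<Union>p\<in>P. \<Union>y\<in>p. (\<lambda>e. e + y) ` E) = UNIV"
    and \<alpha>: "continuous_on {0..1} \<alpha>" "curve_length \<alpha> 0 1 = traj_mass P a x + ennreal \<delta>"
      "(\<Union>P) \<inter> cball x a \<subseteq> \<alpha> ` {0..1}"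
    and "\<delta> \<ge> 0" "traj_mass P a x < top"
  shows "measure lebesgue (cball x (a - r)) \<le> (1 + \<eta>) ^ DIM('a) * measure lebesgue E
    + (1 + \<eta>) ^ (DIM('a) - 1) * (enn2real (traj_mass P a x) + \<delta>) * enn2real (Delta E)"
proof -
  have "curve_length \<alpha> 0 1 = ennreal (enn2real (traj_mass P a x) + \<delta>)"
    using assms(11,12) unfolding \<alpha>(2) by (simp add: ennreal_plus)
  then have "measure lebesgue {\<alpha> t + e | t e. t \<in> {0..1} \<and> e \<in> E} \<le> (1 + \<eta>) ^ DIM('a) * measure lebesgue E
      + (1 + \<eta>) ^ (DIM('a) - 1) * (enn2real (traj_mass P a x) + \<delta>) * enn2real (Delta E)"
    using measure_curve_plus_le[OF E(1-4) \<open>\<eta> > 0\<close> \<alpha>(1) eq_refl] assms(11) by simp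
  moreover have "measure lebesgue (cball x (a - r)) \<le> measure lebesgue {\<alpha> t + e | t e. t \<in> {0..1} \<and> e \<in> E}"
    using cball_subset_curve_plus[OF cover E(5) \<alpha>(3)]
    by (intro measure_mono_fmeasurable fmeasurableD lmeasurable_compact compact_plus_image \<alpha>(1) E(2)) auto
  ultimately show ?thesis
    by linarith
qed

lemma eventually_traj_mass_ge:
  fixes E :: "'a::euclidean_space set" and P :: "'a set set"
  assumes E: "convex E" "compact E" "0 \<in> interior E"
    and "cond_C2 P" and cover: "(\<Union>p\<in>P. \<Union>y\<in>p. (\<lambda>e. e + y) ` E) = UNIV"
    and "y * enn2real (Delta E) < 1"
  shows "\<forall>\<^sub>F a in at_top. \<forall>x. ennreal y \<le> traj_mass P a x / emeasure lebesgue (cball (0::'a) a)"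
proof -
  obtain \<rho> where \<rho>: "\<rho> > 0" "cball 0 \<rho> \<subseteq> E"
    using E(3) mem_interior_cball by blast
  obtain r where "\<forall>e\<in>E. norm e \<le> r"
    using compact_imp_bounded[OF E(2)] bounded_pos by metis
  then have r: "E \<subseteq> cball 0 r"
    by auto
  obtain \<delta> :: "real \<Rightarrow> real" where \<delta>: "\<forall>a>0. \<delta> a > 0" "\<delta> \<in> o[at_top](\<lambda>a. a ^ DIM('a))"
    and C2: "\<forall>\<^sub>F a in at_top. \<forall>x. \<exists>\<alpha>::real \<Rightarrow> 'a. continuous_on {0..1} \<alpha> \<and> curve_length \<alpha> 0 1 < \<infinity> \<and>
          curve_length \<alpha> 0 1 = traj_mass P a x + ennreal (\<delta> a) \<and> (\<Union>P) \<inter> cball x a \<subseteq> \<alpha> ` {0..1}"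
    using assms(4) unfolding cond_C2_def by blast
  define \<omega> where "\<omega> = unit_ball_vol DIM('a)"
  obtain \<eta> where \<eta>: "\<eta> > 0" "(1 + \<eta>) ^ (DIM('a) - 1) * (y * enn2real (Delta E)) < 1"
    using exists_pos_power_mult_less_1 assms(6) by blast
  define K where "K = (1 + \<eta>) ^ DIM('a) * measure lebesgue E"
  define c where "c = (1 + \<eta>) ^ (DIM('a) - 1) * enn2real (Delta E)"
  have "c \<ge> 0" "\<omega> > 0"
    unfolding c_def \<omega>_def using \<eta>(1) by simp_all
  then have "\<forall>\<^sub>F a in at_top. c * y * \<omega> * a ^ DIM('a) < \<omega> * (a - r) ^ DIM('a) - K - c * \<delta> a"
    using eventually_power_dominates_smallo[OF \<delta>(2) DIM_positive \<eta>(2), of \<omega> r K c]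
    by (simp add: c_def mult_ac)
  then show ?thesis
    using C2 eventually_gt_at_top[of r] eventually_gt_at_top[of 0]
  proof eventually_elim
    case (elim a)
    show ?case
    proof
      fix x
      obtain \<alpha> :: "real \<Rightarrow> 'a" where \<alpha>: "continuous_on {0..1} \<alpha>" "curve_length \<alpha> 0 1 < \<infinity>"
        "curve_length \<alpha> 0 1 = traj_mass P a x + ennreal (\<delta> a)" "(\<Union>P) \<inter> cball x a \<subseteq> \<alpha> ` {0..1}"
        using elim(2) by blast
      define T where "T = enn2real (traj_mass P a x)"
      have finite: "traj_mass P a x < top"
        using \<alpha>(2,3) by (simp add: less_top)
      have "\<delta> a \<ge> 0"
        using \<delta>(1) elim(4) by (simp add: less_imp_le)
      have "\<omega> * (a - r) ^ DIM('a) = measure lebesgue (cball x (a - r))"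
        unfolding \<omega>_def using elim(3) by (simp add: content_cball)
      also have "\<dots> \<le> K + c * (T + \<delta> a)"
        using measure_cball_le_traj_mass[OF E(1,2) \<rho> r \<eta>(1) cover \<alpha>(1,3,4) \<open>\<delta> a \<ge> 0\<close> finite]
        unfolding K_def c_def T_def by (simp add: algebra_simps)
      finally have "c * (y * (\<omega> * a ^ DIM('a))) < c * T"
        using elim(1) by (simp add: algebra_simps)
      then have "y * (\<omega> * a ^ DIM('a)) \<le> T"
        using \<open>c \<ge> 0\<close> by (simp add: mult_less_cancel_left)
      moreover have "emeasure lebesgue (cball (0::'a) a) = ennreal (\<omega> * a ^ DIM('a))"
        unfolding \<omega>_def using elim(4) emeasure_cball[of a "0::'a"] by simp
      moreover have "traj_mass P a x = ennreal T"
        unfolding T_def using finite by simp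
      ultimately show "ennreal y \<le> traj_mass P a x / emeasure lebesgue (cball (0::'a) a)"
        using \<open>\<omega> > 0\<close> elim(4) by (simp add: ennreal_le_divide_of_mult_le)
    qed
  qed
qed

theorem proposition4p6:
  fixes E :: "'a::euclidean_space set" and P :: "'a set set"
  assumes "convex E" and "compact E" and "0 \<in> interior E"
    and "trajectory_set P" and "cond_C2 P"
    and "(\<Union>p\<in>P. \<Union>y\<in>p. (\<lambda>e. e + y) ` E) = UNIV"
  shows "lower_density P \<ge> 1 / Delta E"
  unfolding lower_density_def le_Liminf_iff
proof (intro allI impI)
  fix z assume "z < 1 / Delta E"
  then obtain w where w: "z < w" "w < 1 / Delta E"
    using dense by blast
  then have "w = ennreal (enn2real w)"
    using order.strict_trans2[OF w(2) top_greatest] by simp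
  then have "enn2real w * enn2real (Delta E) < 1"
    using w(2) Delta_less_top[OF assms(2)] by (intro mult_enn2real_less_1) simp_all
  with assms have "\<forall>\<^sub>F a in at_top. \<forall>x. ennreal (enn2real w) \<le> traj_mass P a x / emeasure lebesgue (cball (0::'a) a)"
    by (intro eventually_traj_mass_ge)
  then show "\<forall>\<^sub>F a in at_top. z < (INF x. traj_mass P a x / emeasure lebesgue (cball (0::'a) a))"
  proof eventually_elim
    case (elim a)
    then have "w \<le> (INF x. traj_mass P a x / emeasure lebesgue (cball (0::'a) a))"
      using \<open>w = ennreal (enn2real w)\<close> by (auto intro: INF_greatest)
    then show ?case
      using w(1) by order
  qed
qed

end
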